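(* Let $\mathcal{P}=(V,\le)$ be a finite IIC poset and $G_{\mathcal{P}}$ its predecessors-successors bipartite graph. Then every biclique of $G_{\mathcal{P}}$ is equal to $X_v\cup Y_v$ for some $v\in V$.
   Context: All graphs are finite and simple. A biclique of a graph $G$ is a set $P\subseteq V(G)$ such that the induced subgraph $G[P]$ is a complete bipartite graph with both parts nonempty, and $P$ is inclusion-maximal with this property. For a poset $\mathcal{P}=(V,\le)$ and $x\in V$, $I^-_{\mathcal{P}}(x)=\{y\in V: y\le x\}$ and $I^+_{\mathcal{P}}(x)=\{y\in V: x\le y\}$. $\mathcal{P}$ is interval intersection closed (IIC) if for all $u,v\in V$: whenever $I^-_{\mathcal{P}}(u)\cap I^-_{\mathcal{P}}(v)\neq\emptyset$ there is $w\in V$ with $I^-_{\mathcal{P}}(w)=I^-_{\mathcal{P}}(u)\cap I^-_{\mathcal{P}}(v)$, and whenever $I^+_{\mathcal{P}}(u)\cap I^+_{\mathcal{P}}(v)\neq\emptyset$ there is $w\in V$ with $I^+_{\mathcal{P}}(w)=I^+_{\mathcal{P}}(u)\cap I^+_{\mathcal{P}}(v)$. The predecessors-successors bipartite graph $G_{\mathcal{P}}=(A\cup B,E)$ has $A=\{a_v: v\in V\}$, $B=\{b_v:v\in V\}$ (two disjoint copies of $V$) and $E=\{a_ub_v: u,v\in V,\ u\le v\}$. For $v\in V$, $X_v=\{a_u: u\in I^-_{\mathcal{P}}(v)\}$ and $Y_v=\{b_w: w\in I^+_{\mathcal{P}}(v)\}$. *)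

theory Defs
  imports Main
begin

definition poset_on :: "'a set \<Rightarrow> ('a \<Rightarrow> 'a \<Rightarrow> bool) \<Rightarrow> bool" where
  "poset_on V le \<longleftrightarrow>
     (\<forall>x\<in>V. le x x) \<and>
     (\<forall>x\<in>V. \<forall>y\<in>V. le x y \<and> le y x \<longrightarrow> x = y) \<and>
     (\<forall>x\<in>V. \<forall>y\<in>V. \<forall>z\<in>V. le x y \<and> le y z \<longrightarrow> le x z)"

definition down_int :: "'a set \<Rightarrow> ('a \<Rightarrow> 'a \<Rightarrow> bool) \<Rightarrow> 'a \<Rightarrow> 'a set" where
  "down_int V le x = {y\<in>V. le y x}"

definition up_int :: "'a set \<Rightarrow> ('a \<Rightarrow> 'a \<Rightarrow> bool) \<Rightarrow> 'a \<Rightarrow> 'a set" where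
  "up_int V le x = {y\<in>V. le x y}"

definition IIC :: "'a set \<Rightarrow> ('a \<Rightarrow> 'a \<Rightarrow> bool) \<Rightarrow> bool" where
  "IIC V le \<longleftrightarrow>
     (\<forall>u\<in>V. \<forall>v\<in>V.
        (down_int V le u \<inter> down_int V le v \<noteq> {} \<longrightarrow>
           (\<exists>w\<in>V. down_int V le w = down_int V le u \<inter> down_int V le v)) \<and>
        (up_int V le u \<inter> up_int V le v \<noteq> {} \<longrightarrow>
           (\<exists>w\<in>V. up_int V le w = up_int V le u \<inter> up_int V le v)))"

definition induces_complete_bipartite ::
  "'v set \<Rightarrow> ('v \<Rightarrow> 'v \<Rightarrow> bool) \<Rightarrow> 'v set \<Rightarrow> bool" where
  "induces_complete_bipartite VG adj P \<longleftrightarrow> P \<subseteq> VG \<and>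
     (\<exists>S T. S \<noteq> {} \<and> T \<noteq> {} \<and> S \<inter> T = {} \<and> S \<union> T = P \<and>
        (\<forall>s\<in>S. \<forall>t\<in>T. adj s t) \<and>
        (\<forall>s\<in>S. \<forall>s'\<in>S. \<not> adj s s') \<and>
        (\<forall>t\<in>T. \<forall>t'\<in>T. \<not> adj t t'))"

definition biclique :: "'v set \<Rightarrow> ('v \<Rightarrow> 'v \<Rightarrow> bool) \<Rightarrow> 'v set \<Rightarrow> bool" where
  "biclique VG adj P \<longleftrightarrow> induces_complete_bipartite VG adj P \<and>
     (\<forall>Q. P \<subset> Q \<longrightarrow> \<not> induces_complete_bipartite VG adj Q)"

text \<open>Predecessors-successors bipartite graph: vertex a_v is Inl v, b_v is Inr v.\<close>
definition ps_vertices :: "'a set \<Rightarrow> ('a + 'a) set" where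
  "ps_vertices V = Inl ` V \<union> Inr ` V"

definition ps_adj :: "'a set \<Rightarrow> ('a \<Rightarrow> 'a \<Rightarrow> bool) \<Rightarrow> 'a + 'a \<Rightarrow> 'a + 'a \<Rightarrow> bool" where
  "ps_adj V le x y \<longleftrightarrow> (\<exists>u\<in>V. \<exists>v\<in>V. le u v \<and>
      ((x = Inl u \<and> y = Inr v) \<or> (x = Inr v \<and> y = Inl u)))"

definition X_set :: "'a set \<Rightarrow> ('a \<Rightarrow> 'a \<Rightarrow> bool) \<Rightarrow> 'a \<Rightarrow> ('a + 'a) set" where
  "X_set V le v = Inl ` down_int V le v"

definition Y_set :: "'a set \<Rightarrow> ('a \<Rightarrow> 'a \<Rightarrow> bool) \<Rightarrow> 'a \<Rightarrow> ('a + 'a) set" where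
  "Y_set V le v = Inr ` up_int V le v"

end

theory Submission
  imports Defs
begin

text \<open>An induced complete bipartite subgraph of the predecessors-successors graph consists of
  sets A of a-vertices and B of b-vertices with every element of A below every element of B.
  Maximality forces A to be exactly the set of common lower bounds of B and B the set of common
  upper bounds of A. Since A is nonempty and V finite, the IIC property applied repeatedly
  realises A, the intersection of the down-sets of the elements of B, as a single down-set
  I^-(w). Since w \<in> I^-(w), transitivity makes the upper bounds of I^-(w) exactly I^+(w),
  so the biclique is X_w \<union> Y_w.\<close>

definition lower_bounds :: "'a set \<Rightarrow> ('a \<Rightarrow> 'a \<Rightarrow> bool) \<Rightarrow> 'a set \<Rightarrow> 'a set" where
  "lower_bounds V le B = {x\<in>V. \<forall>b\<in>B. le x b}"

definition upper_bounds :: "'a set \<Rightarrow> ('a \<Rightarrow> 'a \<Rightarrow> bool) \<Rightarrow> 'a set \<Rightarrow> 'a set" where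
  "upper_bounds V le A = {y\<in>V. \<forall>a\<in>A. le a y}"

lemma ps_adj_sym: "ps_adj V le x y \<longleftrightarrow> ps_adj V le y x"
  unfolding ps_adj_def by blast

lemma ps_adj_Inl_Inr: "ps_adj V le (Inl a) (Inr b) \<longleftrightarrow> a \<in> V \<and> b \<in> V \<and> le a b"
  unfolding ps_adj_def by blast

lemma ps_adj_no_common_neighbour: "\<not> (ps_adj V le x (Inl a) \<and> ps_adj V le x (Inr b))"
  unfolding ps_adj_def by blast

lemma induces_complete_bipartite_ps_iff:
  "induces_complete_bipartite (ps_vertices V) (ps_adj V le) P \<longleftrightarrow>
     (\<exists>A B. A \<noteq> {} \<and> B \<noteq> {} \<and> A \<subseteq> V \<and> B \<subseteq> V \<and> P = Inl ` A \<union> Inr ` B \<and>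
        (\<forall>a\<in>A. \<forall>b\<in>B. le a b))"
  (is "?icb \<longleftrightarrow> ?rect")
proof
  assume ?icb
  then obtain S T where PV: "P \<subseteq> ps_vertices V" and ST: "S \<noteq> {}" "T \<noteq> {}" "S \<union> T = P"
    and adj: "\<forall>s\<in>S. \<forall>t\<in>T. ps_adj V le s t"
    unfolding induces_complete_bipartite_def by blast
  define A where "A = {u. Inl u \<in> P}"
  define B where "B = {v. Inr v \<in> P}"
  have P: "P = Inl ` A \<union> Inr ` B"
  proof (rule set_eqI)
    fix x show "x \<in> P \<longleftrightarrow> x \<in> Inl ` A \<union> Inr ` B"
      by (cases x) (auto simp: A_def B_def)
  qed
  have AB: "A \<subseteq> V" "B \<subseteq> V"
    using PV unfolding A_def B_def ps_vertices_def by auto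
  obtain s t where st: "s \<in> S" "t \<in> T" using ST by blast
  then have "ps_adj V le s t" using adj by blast
  then have "A \<noteq> {} \<and> B \<noteq> {}"
    using st ST(3) unfolding A_def B_def ps_adj_def by blast
  moreover have "le a b" if a: "a \<in> A" and b: "b \<in> B" for a b
  proof -
    \<comment> \<open>Inl a and Inr b lie on different sides, since no vertex is adjacent to both.\<close>
    have same_side: False if "Inl a \<in> X" "Inr b \<in> X" "\<forall>x\<in>X. ps_adj V le x y" for X y
      using that ps_adj_no_common_neighbour[of V le y a b] ps_adj_sym[of V le y] by blast
    have "Inl a \<in> S \<union> T" "Inr b \<in> S \<union> T" using a b ST(3) unfolding A_def B_def by auto
    moreover have "\<forall>x\<in>S. ps_adj V le x t" "\<forall>x\<in>T. ps_adj V le x s"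
      using adj st ps_adj_sym[of V le] by blast+
    ultimately have opposite: "(Inl a \<in> S \<and> Inr b \<in> T) \<or> (Inr b \<in> S \<and> Inl a \<in> T)"
      using same_side by blast
    then have "ps_adj V le (Inl a) (Inr b)" using adj ps_adj_sym[of V le "Inr b"] by blast
    then show "le a b" by (simp add: ps_adj_Inl_Inr)
  qed
  ultimately show ?rect using P AB by blast
next
  assume ?rect
  then obtain A B where AB: "A \<noteq> {}" "B \<noteq> {}" "A \<subseteq> V" "B \<subseteq> V"
    and P: "P = Inl ` A \<union> Inr ` B" and le: "\<forall>a\<in>A. \<forall>b\<in>B. le a b" by blast
  have "\<forall>s\<in>Inl ` A. \<forall>t\<in>Inr ` B. ps_adj V le s t"
    using AB le by (auto simp: ps_adj_Inl_Inr)
  moreover have "\<forall>s\<in>Inl ` A. \<forall>s'\<in>Inl ` A. \<not> ps_adj V le s s'"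
    and "\<forall>t\<in>Inr ` B. \<forall>t'\<in>Inr ` B. \<not> ps_adj V le t t'"
    unfolding ps_adj_def by blast+
  moreover have "P \<subseteq> ps_vertices V"
    using AB P unfolding ps_vertices_def by auto
  ultimately show ?icb
    unfolding induces_complete_bipartite_def P
    using AB(1,2) by (intro conjI exI[of _ "Inl ` A"] exI[of _ "Inr ` B"]) auto
qed

lemma biclique_ps_polar:
  assumes "biclique (ps_vertices V) (ps_adj V le) P"
  obtains A B where "A \<noteq> {}" "B \<noteq> {}" "P = Inl ` A \<union> Inr ` B"
    and "A = lower_bounds V le B" and "B = upper_bounds V le A"
proof -
  have "induces_complete_bipartite (ps_vertices V) (ps_adj V le) P"
    using assms unfolding biclique_def by blast
  then obtain A B where AB: "A \<noteq> {}" "B \<noteq> {}" "A \<subseteq> V" "B \<subseteq> V"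
    and P: "P = Inl ` A \<union> Inr ` B" and le: "\<forall>a\<in>A. \<forall>b\<in>B. le a b"
    unfolding induces_complete_bipartite_ps_iff by blast
  have maximal: "P = Inl ` A' \<union> Inr ` B'"
    if "A \<subseteq> A'" "B \<subseteq> B'" "A' \<subseteq> V" "B' \<subseteq> V" "\<forall>a\<in>A'. \<forall>b\<in>B'. le a b" for A' B'
  proof -
    have "induces_complete_bipartite (ps_vertices V) (ps_adj V le) (Inl ` A' \<union> Inr ` B')"
      unfolding induces_complete_bipartite_ps_iff
      using that AB(1,2) by (intro exI[of _ A'] exI[of _ B'] conjI) auto
    moreover have "P \<subseteq> Inl ` A' \<union> Inr ` B'" using P that(1,2) by blast
    ultimately show ?thesis using assms unfolding biclique_def by blast
  qed
  have "lower_bounds V le B \<subseteq> A"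
  proof
    fix x assume x: "x \<in> lower_bounds V le B"
    have "P = Inl ` insert x A \<union> Inr ` B"
      by (rule maximal) (use x AB le in \<open>auto simp: lower_bounds_def\<close>)
    then have "Inl x \<in> P" by simp
    with P show "x \<in> A" by auto
  qed
  moreover have "upper_bounds V le A \<subseteq> B"
  proof
    fix y assume y: "y \<in> upper_bounds V le A"
    have "P = Inl ` A \<union> Inr ` insert y B"
      by (rule maximal) (use y AB le in \<open>auto simp: upper_bounds_def\<close>)
    then have "Inr y \<in> P" by simp
    with P show "y \<in> B" by auto
  qed
  ultimately have "A = lower_bounds V le B" "B = upper_bounds V le A"
    using AB le unfolding lower_bounds_def upper_bounds_def by blast+
  with AB(1,2) P show thesis by (rule that)
qed

lemma lower_bounds_eq_Inter_down_int:
  "B \<noteq> {} \<Longrightarrow> lower_bounds V le B = (\<Inter>b\<in>B. down_int V le b)"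
  unfolding lower_bounds_def down_int_def by auto

lemma IIC_Inter_down_int:
  assumes "IIC V le" "finite B" "B \<noteq> {}" "B \<subseteq> V"
    and "(\<Inter>b\<in>B. down_int V le b) \<noteq> {}"
  shows "\<exists>w\<in>V. down_int V le w = (\<Inter>b\<in>B. down_int V le b)"
  using assms(2-5)
proof (induction B rule: finite_ne_induct)
  case (singleton b)
  then show ?case by auto
next
  case (insert b B)
  then obtain w where w: "w \<in> V" "down_int V le w = (\<Inter>c\<in>B. down_int V le c)"
    by auto
  with insert.prems have "down_int V le b \<inter> down_int V le w \<noteq> {}" "b \<in> V" by auto
  with assms(1) w(1) obtain w' where "w' \<in> V"
    "down_int V le w' = down_int V le b \<inter> down_int V le w"
    unfolding IIC_def by blast
  with w(2) show ?case by auto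
qed

lemma upper_bounds_down_int:
  assumes "poset_on V le" "w \<in> V"
  shows "upper_bounds V le (down_int V le w) = up_int V le w"
  using assms unfolding poset_on_def upper_bounds_def down_int_def up_int_def by blast

theorem lemma8:
  fixes V :: "'a set" and le :: "'a \<Rightarrow> 'a \<Rightarrow> bool" and P :: "('a + 'a) set"
  assumes "finite V" and "poset_on V le" and "IIC V le"
    and "biclique (ps_vertices V) (ps_adj V le) P"
  shows "\<exists>v\<in>V. P = X_set V le v \<union> Y_set V le v"
proof -
  obtain A B where "A \<noteq> {}" "B \<noteq> {}" and P: "P = Inl ` A \<union> Inr ` B"
    and A: "A = lower_bounds V le B" and B: "B = upper_bounds V le A"
    using biclique_ps_polar[OF assms(4)] .
  have "B \<subseteq> V" using B unfolding upper_bounds_def by blast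
  with assms(1) have "finite B" by (rule finite_subset[rotated])
  have "A = (\<Inter>b\<in>B. down_int V le b)"
    using A \<open>B \<noteq> {}\<close> by (simp add: lower_bounds_eq_Inter_down_int)
  then obtain w where w: "w \<in> V" "down_int V le w = A"
    using IIC_Inter_down_int[OF assms(3) \<open>finite B\<close> \<open>B \<noteq> {}\<close> \<open>B \<subseteq> V\<close>] \<open>A \<noteq> {}\<close>
    by auto
  have "B = up_int V le w"
    using B w upper_bounds_down_int[OF assms(2) w(1)] by simp
  with w P have "P = X_set V le w \<union> Y_set V le w"
    unfolding X_set_def Y_set_def by simp
  with w(1) show ?thesis ..
qed

end
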